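(* In the setting below, let $0\le\ell<j\le n-1$ and assume $\Lambda_{n-\ell,n-j}(s)\le\exp(\kappa_{n-\ell,n-j}\|s\|^2/2)$ for all $s\in\mathbb R^m$. Then for every $x^{(n-\ell-1)}$, $$\Bigl\|\int_{\mathbb R^m}g_\ell^2\,\frac{\partial u_{n-\ell}}{\partial x_{n-j}}\,dp_{n-\ell}\Bigr\|\le g_{\ell+1}\Bigl(2\kappa_{n-\ell,n-j}\int_{\mathbb R^m}g_\ell^2\log(g_\ell^2/g_{\ell+1}^2)\,dp_{n-\ell}\Bigr)^{1/2},$$ where $dp_{n-\ell}=p_{n-\ell}(dx_{n-\ell}\mid x^{(n-\ell-1)})$ and $g_{\ell+1}=g_{\ell+1}(x^{(n-\ell-1)})$.
   Context: Setting: a process on $\mathbb R^m$ with conditional laws $p_i(dx_i\mid x^{(i-1)})=e^{-u_i(x^{(i)})}dx_i$ ($i=2,\dots,n$), $u_i$ continuously differentiable; $\partial/\partial x_k$ is the gradient in $x_k\in\mathbb R^m$; $\Lambda_{i,k}(s)=\sup_{x^{(i-1)}}\int\exp(\langle s,\frac{\partial u_i}{\partial x_k}(x^{(i)})\rangle)p_i(dx_i\mid x^{(i-1)})$. Given a smooth compactly supported $f:(\mathbb R^m)^n\to\mathbb R$, define $g_0=f$ and, for $i=1,\dots,n-1$, $g_i(x^{(n-i)})=\bigl(\int_{\mathbb R^m}g_{i-1}(x^{(n-i+1)})^2\,p_{n-i+1}(dx_{n-i+1}\mid x^{(n-i)})\bigr)^{1/2}$. Conventions $0\log(0/\cdot)=0$.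 *)

theory Defs
  imports "HOL-Analysis.Analysis"
begin

text \<open>A point of (R^m)^n is represented by a function x :: nat \<Rightarrow> 'a,
  'a a Euclidean space (= R^m), of which only the coordinates x 1, ..., x n matter;
  x^(i) = (x 1, ..., x i).  A function of x^(i) is a function of x depending only on
  the coordinates 1..i.  The density of p_i(. | x^(i-1)) at y is exp(- u i (x(i:=y))).\<close>

definition depends_only :: "nat \<Rightarrow> ((nat \<Rightarrow> 'a) \<Rightarrow> 'b) \<Rightarrow> bool" where
  "depends_only i h \<longleftrightarrow> (\<forall>x x'. (\<forall>k\<in>{1..i}. x k = x' k) \<longrightarrow> h x = h x')"

text \<open>Smoothness (C^infinity) of a function of x^(n): it is continuous, and all partial
  gradients in the blocks x_1..x_n exist and their components are again smooth.\<close>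
coinductive smooth_fun :: "nat \<Rightarrow> ((nat \<Rightarrow> 'a::euclidean_space) \<Rightarrow> real) \<Rightarrow> bool" where
  "\<lbrakk> continuous_on UNIV h;
     \<And>k. k \<in> {1..n} \<Longrightarrow> \<exists>D. (\<forall>x. ((\<lambda>y. h (x(k:=y))) has_derivative (\<lambda>v. D x \<bullet> v)) (at (x k)))
                              \<and> (\<forall>b\<in>Basis. smooth_fun n (\<lambda>x. D x \<bullet> b)) \<rbrakk>
   \<Longrightarrow> smooth_fun n h"

fun gfun :: "nat \<Rightarrow> (nat \<Rightarrow> (nat \<Rightarrow> 'a::euclidean_space) \<Rightarrow> real) \<Rightarrow> ((nat \<Rightarrow> 'a) \<Rightarrow> real)
              \<Rightarrow> nat \<Rightarrow> (nat \<Rightarrow> 'a) \<Rightarrow> real" where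
  "gfun n u f 0 = f"
| "gfun n u f (Suc i) = (\<lambda>x. sqrt (\<integral>y. (gfun n u f i (x(n - i := y)))\<^sup>2
                                        * exp (- u (n - i) (x(n - i := y))) \<partial>lborel))"

definition Lambda :: "(nat \<Rightarrow> (nat \<Rightarrow> 'a::euclidean_space) \<Rightarrow> real)
     \<Rightarrow> (nat \<Rightarrow> nat \<Rightarrow> (nat \<Rightarrow> 'a) \<Rightarrow> 'a) \<Rightarrow> nat \<Rightarrow> nat \<Rightarrow> 'a \<Rightarrow> ennreal" where
  "Lambda u du i k s = (SUP x. \<integral>\<^sup>+ y. ennreal (exp (s \<bullet> du i k (x(i:=y))) * exp (- u i (x(i:=y)))) \<partial>lborel)"

end

(*
  Write p for the conditional law p_{n-l}(. | x^(n-l-1)), h = g_l^2, V for the partial gradient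
  du_{n-l}/dx_{n-j}, and Z = E_p h = g_{l+1}^2.  Integrating the Fenchel-Young inequality
  h b <= h ln (h/Z) - h + Z e^b against p with b = <s,V> - kappa |s|^2/2 and using the sub-Gaussian
  bound on E_p e^<s,V> gives the Donsker-Varadhan estimate
    <s, E_p[h V]> <= E_p[h ln (h/Z)] + Z kappa |s|^2/2   for every s.
  Taking s in the direction of E_p[h V] and optimising over its length yields
  |E_p[h V]|^2 <= 2 kappa Z E_p[h ln (h/Z)].
  The remaining work is measure theory: u is continuous because its partial gradients are, so all
  g_i are measurable, and they are bounded by sup |f|.
*)
theory Submission
  imports Defs "HOL-Probability.Probability_Measure"
begin

lemma fenchel_young_exp:
  fixes Z h b :: real
  assumes "0 < Z" and "0 \<le> h"
  shows "h * b \<le> h * ln (h / Z) - h + Z * exp b"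
proof (cases "h = 0")
  case False
  then have h: "0 < h" using assms(2) by simp
  have "1 + (b - ln (h / Z)) \<le> exp (b - ln (h / Z))" by (rule exp_ge_add_one_self)
  also have "\<dots> = Z * exp b / h" using h assms(1) by (simp add: exp_diff)
  finally have "h * (1 + (b - ln (h / Z))) \<le> Z * exp b"
    using h by (simp add: field_simps)
  then show ?thesis by (simp add: algebra_simps)
qed (use assms in simp)

lemma abs_mult_ln_div_le:
  fixes Z h C :: real
  assumes "0 < Z" and "0 \<le> h" and "h \<le> C"
  shows "\<bar>h * ln (h / Z)\<bar> \<le> C\<^sup>2 / Z + Z"
proof -
  have "h - Z \<le> h * ln (h / Z)"
    using fenchel_young_exp[OF assms(1,2), of 0] by simp
  moreover have "h * ln (h / Z) \<le> C\<^sup>2 / Z"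
  proof (cases "h = 0")
    case False
    then have "h * ln (h / Z) \<le> h * (h / Z - 1)"
      using assms by (intro mult_left_mono ln_le_minus_one) auto
    also have "\<dots> \<le> h * h / Z" using assms by (simp add: field_simps)
    also have "\<dots> \<le> C\<^sup>2 / Z"
      using assms by (intro divide_right_mono) (auto simp: power2_eq_square intro: mult_mono)
    finally show ?thesis .
  qed (use assms in simp)
  moreover have "0 \<le> C\<^sup>2 / Z" using assms by simp
  ultimately show ?thesis using assms by linarith
qed

lemma sq_le_of_forall_linear_le_quadratic:
  fixes a c E :: real
  assumes "0 \<le> a" and "0 \<le> c" and "0 \<le> E"
    and le: "\<And>t. 0 < t \<Longrightarrow> t * a \<le> E + c * t\<^sup>2 / 2"
  shows "a\<^sup>2 \<le> 2 * c * E"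
proof (cases "a = 0")
  case False
  then have a: "0 < a" using assms(1) by simp
  show ?thesis
  proof (cases "c = 0")
    case True
    have "(E + 1) / a * a \<le> E" using le[of "(E + 1) / a"] True a assms(3) by simp
    then show ?thesis using a by simp
  next
    case False
    then have c: "0 < c" using assms(2) by simp
    have "a / c * a \<le> E + c * (a / c)\<^sup>2 / 2" using le[of "a / c"] a c by simp
    then show ?thesis using c by (simp add: field_simps power2_eq_square)
  qed
qed (use assms in simp)

lemma integrable_bounded_scaleR:
  fixes h :: "'a \<Rightarrow> real" and V :: "'a \<Rightarrow> 'b::{banach, second_countable_topology}"
  assumes "h \<in> borel_measurable M" and "\<And>y. \<bar>h y\<bar> \<le> C" and "integrable M V"
  shows "integrable M (\<lambda>y. h y *\<^sub>R V y)"
proof (rule Bochner_Integration.integrable_bound)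
  show "integrable M (\<lambda>y. C * norm (V y))" using assms(3) by simp
  show "AE y in M. norm (h y *\<^sub>R V y) \<le> norm (C * norm (V y))"
    using assms(2) by (intro AE_I2) (simp add: mult_right_mono order_trans[OF _ abs_ge_self])
qed (use assms in measurable)

lemma integrable_and_integral_le_of_nn_integral_le:
  fixes f :: "'a \<Rightarrow> real"
  assumes "f \<in> borel_measurable M" and "\<And>y. 0 \<le> f y"
    and le: "(\<integral>\<^sup>+y. ennreal (f y) \<partial>M) \<le> ennreal c" and "0 \<le> c"
  shows "integrable M f" and "integral\<^sup>L M f \<le> c"
proof -
  show "integrable M f"
    using assms by (intro integrableI_nonneg) (auto intro: le_less_trans[OF le])
  have "integral\<^sup>L M f = enn2real (\<integral>\<^sup>+y. ennreal (f y) \<partial>M)"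
    using assms by (intro integral_eq_nn_integral) auto
  also have "\<dots> \<le> c"
    using enn2real_mono[OF le] \<open>0 \<le> c\<close> by simp
  finally show "integral\<^sup>L M f \<le> c" .
qed

context prob_space
begin

lemma integrable_of_integrable_exp_inner:
  fixes V :: "'a \<Rightarrow> 'b::euclidean_space"
  assumes "V \<in> borel_measurable M" and exp_int: "\<And>s. integrable M (\<lambda>y. exp (s \<bullet> V y))"
  shows "integrable M V"
proof (rule Bochner_Integration.integrable_bound)
  show "integrable M (\<lambda>y. \<Sum>b\<in>Basis. exp (b \<bullet> V y) + exp ((- b) \<bullet> V y))"
    using exp_int by (intro Bochner_Integration.integrable_sum Bochner_Integration.integrable_add)
  show "AE y in M. norm (V y) \<le> norm (\<Sum>b\<in>Basis. exp (b \<bullet> V y) + exp ((- b) \<bullet> V y))"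
  proof (intro AE_I2)
    fix y
    have "\<bar>t\<bar> \<le> exp t + exp (- t)" for t :: real
      using exp_ge_add_one_self[of t] exp_ge_add_one_self[of "- t"] exp_gt_zero[of t] exp_gt_zero[of "- t"]
      by linarith
    then have "norm (V y) \<le> (\<Sum>b\<in>Basis. exp (b \<bullet> V y) + exp ((- b) \<bullet> V y))"
      using norm_le_l1[of "V y"] by (smt (verit) inner_commute inner_minus_left sum_mono)
    then show "norm (V y) \<le> norm (\<Sum>b\<in>Basis. exp (b \<bullet> V y) + exp ((- b) \<bullet> V y))"
      by simp
  qed
qed (rule assms(1))

lemma expectation_mult_le_entropy:
  fixes h b :: "'a \<Rightarrow> real"
  assumes h_meas: "h \<in> borel_measurable M" and h_nonneg: "\<And>y. 0 \<le> h y" and h_le: "\<And>y. h y \<le> C"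
    and Z: "0 < expectation h"
    and b_int: "integrable M b" and exp_b_int: "integrable M (\<lambda>y. exp (b y))"
  shows "expectation (\<lambda>y. h y * b y)
    \<le> expectation (\<lambda>y. h y * ln (h y / expectation h)) - expectation h
       + expectation h * expectation (\<lambda>y. exp (b y))"
proof -
  define Z where "Z = expectation h"
  have h_int: "integrable M h"
    using h_nonneg h_le by (intro integrable_const_bound[where B = C] AE_I2 h_meas) simp
  have hb_int: "integrable M (\<lambda>y. h y * b y)"
    using integrable_bounded_scaleR[OF h_meas _ b_int, of C] h_nonneg h_le by simp
  have "(\<lambda>y. h y * ln (h y / Z)) \<in> borel_measurable M" using h_meas by measurable
  then have ent_int: "integrable M (\<lambda>y. h y * ln (h y / Z))"
    using abs_mult_ln_div_le[OF Z[folded Z_def] h_nonneg h_le]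
    by (intro integrable_const_bound[where B = "C\<^sup>2 / Z + Z"] AE_I2) simp_all
  have "expectation (\<lambda>y. h y * b y)
      \<le> expectation (\<lambda>y. h y * ln (h y / Z) - h y + Z * exp (b y))"
    using fenchel_young_exp[OF Z[folded Z_def] h_nonneg]
    by (intro integral_mono hb_int Bochner_Integration.integrable_add Bochner_Integration.integrable_diff
        ent_int h_int integrable_mult_right exp_b_int)
  also have "\<dots> = expectation (\<lambda>y. h y * ln (h y / Z)) - Z + Z * expectation (\<lambda>y. exp (b y))"
    using ent_int h_int exp_b_int by (simp add: Z_def)
  finally show ?thesis unfolding Z_def .
qed

lemma subgaussian_param_nonneg:
  fixes V :: "'a \<Rightarrow> 'b::euclidean_space"
  assumes exp_int: "\<And>s. integrable M (\<lambda>y. exp (s \<bullet> V y))"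
    and mgf_le: "\<And>s. expectation (\<lambda>y. exp (s \<bullet> V y)) \<le> exp (\<kappa> * (norm s)\<^sup>2 / 2)"
  shows "0 \<le> \<kappa>"
proof -
  obtain b :: 'b where b: "b \<in> Basis" using nonempty_Basis by blast
  have "2 \<le> exp t + exp (- t)" for t :: real
    using exp_ge_add_one_self[of t] exp_ge_add_one_self[of "- t"] by linarith
  then have "2 \<le> expectation (\<lambda>y. exp (b \<bullet> V y) + exp ((- b) \<bullet> V y))"
    using exp_int[of b] exp_int[of "- b"]
    by (intro integral_ge_const Bochner_Integration.integrable_add AE_I2) simp_all
  also have "\<dots> = expectation (\<lambda>y. exp (b \<bullet> V y)) + expectation (\<lambda>y. exp ((- b) \<bullet> V y))"
    using exp_int[of b] exp_int[of "- b"] by (rule Bochner_Integration.integral_add)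
  also have "\<dots> \<le> 2 * exp (\<kappa> / 2)"
    using mgf_le[of b] mgf_le[of "- b"] b by simp
  finally show ?thesis by simp
qed

lemma inner_expectation_le_entropy_plus_quadratic:
  fixes h :: "'a \<Rightarrow> real" and V :: "'a \<Rightarrow> 'b::euclidean_space"
  assumes h_meas: "h \<in> borel_measurable M" and h_nonneg: "\<And>y. 0 \<le> h y" and h_le: "\<And>y. h y \<le> C"
    and Z: "0 < expectation h" and V_meas: "V \<in> borel_measurable M"
    and exp_int: "\<And>s. integrable M (\<lambda>y. exp (s \<bullet> V y))"
    and mgf_le: "\<And>s. expectation (\<lambda>y. exp (s \<bullet> V y)) \<le> exp (\<kappa> * (norm s)\<^sup>2 / 2)"
  shows "s \<bullet> expectation (\<lambda>y. h y *\<^sub>R V y)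
    \<le> expectation (\<lambda>y. h y * ln (h y / expectation h)) + expectation h * (\<kappa> * (norm s)\<^sup>2 / 2)"
proof -
  define c where "c = \<kappa> * (norm s)\<^sup>2 / 2"
  have V_int: "integrable M V" by (rule integrable_of_integrable_exp_inner[OF V_meas exp_int])
  have h_int: "integrable M h"
    using h_nonneg h_le by (intro integrable_const_bound[where B = C] AE_I2 h_meas) simp
  have hV_int: "integrable M (\<lambda>y. h y *\<^sub>R V y)"
    using h_nonneg h_le by (intro integrable_bounded_scaleR[OF h_meas _ V_int, of C]) simp
  have exp_shift: "exp (s \<bullet> V y - c) = exp (- c) * exp (s \<bullet> V y)" for y
    by (simp add: exp_diff exp_minus field_simps)
  have "expectation (\<lambda>y. exp (s \<bullet> V y - c)) = exp (- c) * expectation (\<lambda>y. exp (s \<bullet> V y))"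
    unfolding exp_shift by simp
  also have "\<dots> \<le> exp (- c) * exp c"
    using mgf_le[of s] unfolding c_def by (intro mult_left_mono) auto
  finally have mgf_shift_le: "expectation (\<lambda>y. exp (s \<bullet> V y - c)) \<le> 1"
    by (simp add: exp_minus)
  have "expectation (\<lambda>y. h y * (s \<bullet> V y - c))
      \<le> expectation (\<lambda>y. h y * ln (h y / expectation h)) - expectation h
         + expectation h * expectation (\<lambda>y. exp (s \<bullet> V y - c))"
  proof (rule expectation_mult_le_entropy[OF h_meas h_nonneg h_le Z])
    show "integrable M (\<lambda>y. s \<bullet> V y - c)" using V_int by simp
    show "integrable M (\<lambda>y. exp (s \<bullet> V y - c))" unfolding exp_shift using exp_int by simp
  qed
  also have "\<dots> \<le> expectation (\<lambda>y. h y * ln (h y / expectation h))"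
    using mult_left_le[OF mgf_shift_le, of "expectation h"] Z by simp
  also have "(\<lambda>y. h y * (s \<bullet> V y - c)) = (\<lambda>y. s \<bullet> (h y *\<^sub>R V y) - c * h y)"
    by (simp add: fun_eq_iff algebra_simps)
  also have "expectation \<dots> = expectation (\<lambda>y. s \<bullet> (h y *\<^sub>R V y)) - expectation (\<lambda>y. c * h y)"
    using hV_int h_int by (intro Bochner_Integration.integral_diff integrable_inner_right) auto
  also have "\<dots> = s \<bullet> expectation (\<lambda>y. h y *\<^sub>R V y) - c * expectation h"
    by (simp only: integral_inner_right[OF hV_int] integral_mult_right_zero)
  finally show ?thesis unfolding c_def by (simp add: algebra_simps)
qed

lemma norm_expectation_scaleR_le_sqrt_entropy:
  fixes h :: "'a \<Rightarrow> real" and V :: "'a \<Rightarrow> 'b::euclidean_space"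
  assumes h_meas: "h \<in> borel_measurable M" and h_nonneg: "\<And>y. 0 \<le> h y" and h_le: "\<And>y. h y \<le> C"
    and V_meas: "V \<in> borel_measurable M"
    and exp_int: "\<And>s. integrable M (\<lambda>y. exp (s \<bullet> V y))"
    and mgf_le: "\<And>s. expectation (\<lambda>y. exp (s \<bullet> V y)) \<le> exp (\<kappa> * (norm s)\<^sup>2 / 2)"
  shows "norm (expectation (\<lambda>y. h y *\<^sub>R V y))
    \<le> sqrt (expectation h) * sqrt (2 * \<kappa> * expectation (\<lambda>y. h y * ln (h y / expectation h)))"
proof -
  define Z where "Z = expectation h"
  define A where "A = expectation (\<lambda>y. h y *\<^sub>R V y)"
  define E where "E = expectation (\<lambda>y. h y * ln (h y / Z))"
  have h_int: "integrable M h"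
    using h_nonneg h_le by (intro integrable_const_bound[where B = C] AE_I2 h_meas) simp
  have "0 \<le> Z" unfolding Z_def using h_nonneg by simp
  then consider (null) "Z = 0" | (pos) "0 < Z" by linarith
  then show ?thesis
  proof cases
    case null
    then have "AE y in M. h y = 0"
      using h_int h_nonneg unfolding Z_def by (subst (asm) integral_nonneg_eq_0_iff_AE) auto
    then have "A = 0" unfolding A_def by (intro integral_eq_zero_AE) (auto elim: AE_mp)
    then show ?thesis using null by (simp add: A_def Z_def)
  next
    case pos
    have \<kappa>: "0 \<le> \<kappa>" by (rule subgaussian_param_nonneg[OF exp_int mgf_le])
    have E: "0 \<le> E"
      using expectation_mult_le_entropy[OF h_meas h_nonneg h_le pos[unfolded Z_def], of "\<lambda>_. 0"]
      by (simp add: E_def Z_def prob_space)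
    have "t * norm A \<le> E + \<kappa> * Z * t\<^sup>2 / 2" if "0 < t" for t
    proof -
      have "t * norm A = (t *\<^sub>R sgn A) \<bullet> A"
        by (cases "A = 0") (simp_all add: sgn_div_norm power2_norm_eq_inner[symmetric] power2_eq_square)
      also have "\<dots> \<le> E + Z * (\<kappa> * (norm (t *\<^sub>R sgn A))\<^sup>2 / 2)"
        using inner_expectation_le_entropy_plus_quadratic[OF h_meas h_nonneg h_le pos[unfolded Z_def]
            V_meas exp_int mgf_le, of "t *\<^sub>R sgn A"]
        by (simp only: A_def E_def Z_def)
      also have "\<dots> \<le> E + \<kappa> * Z * t\<^sup>2 / 2"
        using that \<kappa> pos by (auto simp: norm_sgn mult_left_mono)
      finally show ?thesis .
    qed
    then have "(norm A)\<^sup>2 \<le> 2 * (\<kappa> * Z) * E"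
      using \<kappa> pos E by (intro sq_le_of_forall_linear_le_quadratic) auto
    then have "norm A \<le> sqrt (Z * (2 * \<kappa> * E))"
      by (intro real_le_rsqrt) (simp add: algebra_simps)
    then show ?thesis by (simp add: real_sqrt_mult A_def E_def Z_def)
  qed
qed

end

lemma continuous_on_fun_upd:
  "continuous_on UNIV (\<lambda>p::(nat \<Rightarrow> 'a::topological_space) \<times> 'a. (fst p)(k := snd p))"
proof (rule continuous_on_coordinatewise_then_product)
  fix c
  have "continuous_on UNIV (\<lambda>p::(nat \<Rightarrow> 'a) \<times> 'a. fst p c)"
    by (rule continuous_on_compose2[OF continuous_on_product_coordinates continuous_on_fst]) auto
  then show "continuous_on UNIV (\<lambda>p::(nat \<Rightarrow> 'a) \<times> 'a. ((fst p)(k := snd p)) c)"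
    by (cases "c = k") (simp_all add: continuous_on_snd)
qed

lemma borel_measurable_comp_fun_upd:
  fixes h :: "(nat \<Rightarrow> 'a::euclidean_space) \<Rightarrow> 'b::topological_space"
  assumes "h \<in> borel_measurable borel"
  shows "(\<lambda>y. h (x(k := y))) \<in> borel_measurable lborel"
proof -
  have "continuous_on UNIV (\<lambda>y::'a. (x, y))" by (intro continuous_intros)
  from continuous_on_compose2[OF continuous_on_fun_upd this]
  have "(\<lambda>y. x(k := y)) \<in> borel_measurable lborel"
    unfolding measurable_lborel2 by (intro borel_measurable_continuous_onI) simp
  from measurable_compose[OF this assms] show ?thesis .
qed

lemma borel_measurable_integral_fun_upd:
  fixes G :: "(nat \<Rightarrow> 'a::euclidean_space) \<Rightarrow> real"
  assumes "G \<in> borel_measurable borel"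
  shows "(\<lambda>x. \<integral>y. G (x(k := y)) \<partial>lborel) \<in> borel_measurable borel"
proof -
  have "sets (borel \<Otimes>\<^sub>M lborel) = sets (borel \<Otimes>\<^sub>M (borel :: 'a measure))"
    by (rule sets_pair_measure_cong) simp_all
  then have sets_eq: "sets (borel \<Otimes>\<^sub>M lborel) = sets (borel :: ((nat \<Rightarrow> 'a) \<times> 'a) measure)"
    by (metis borel_prod)
  have "(\<lambda>p. (fst p)(k := snd p)) \<in> borel_measurable (borel :: ((nat \<Rightarrow> 'a) \<times> 'a) measure)"
    by (rule borel_measurable_continuous_onI[OF continuous_on_fun_upd])
  from measurable_compose[OF this assms]
  have "(\<lambda>(x, y). G (x(k := y))) \<in> borel_measurable (borel \<Otimes>\<^sub>M lborel)"
    unfolding measurable_cong_sets[OF sets_eq refl] by (simp add: case_prod_beta')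
  then show ?thesis by (rule lborel.borel_measurable_lebesgue_integral)
qed

lemma depends_onlyD:
  "depends_only i h \<Longrightarrow> (\<And>k. k \<in> {1..i} \<Longrightarrow> x k = x' k) \<Longrightarrow> h x = h x'"
  unfolding depends_only_def by blast

lemma tendsto_coordinate: "((\<lambda>x::nat \<Rightarrow> 'a::metric_space. x c) \<longlongrightarrow> x0 c) (at x0)"
  using continuous_on_product_coordinates[of c]
  by (metis UNIV_I continuous_on_eq_continuous_at isCont_def open_UNIV)

definition coord_cball :: "nat set \<Rightarrow> (nat \<Rightarrow> 'a::metric_space) \<Rightarrow> real \<Rightarrow> (nat \<Rightarrow> 'a) set" where
  "coord_cball I x0 r = (\<Pi>\<^sub>E c\<in>UNIV. if c \<in> I then cball (x0 c) r else {x0 c})"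

lemma mem_coord_cball:
  "x \<in> coord_cball I x0 r \<longleftrightarrow> (\<forall>c\<in>I. dist (x0 c) (x c) \<le> r) \<and> (\<forall>c. c \<notin> I \<longrightarrow> x c = x0 c)"
  unfolding coord_cball_def PiE_iff by (auto split: if_splits)

lemma compact_coord_cball: "compact (coord_cball I (x0 :: nat \<Rightarrow> 'a::heine_borel) r)"
proof -
  have "compactin (product_topology (\<lambda>c. euclidean) UNIV) (coord_cball I x0 r)"
    unfolding coord_cball_def by (subst compactin_PiE) auto
  then show ?thesis by (simp add: euclidean_product_topology)
qed

lemma abs_diff_le_sum_dist_on_coord_cball:
  fixes U :: "(nat \<Rightarrow> 'a::euclidean_space) \<Rightarrow> real" and D :: "nat \<Rightarrow> (nat \<Rightarrow> 'a) \<Rightarrow> 'a"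
  assumes "finite I" "I \<subseteq> J"
    and deriv: "\<And>k x. k \<in> J \<Longrightarrow> ((\<lambda>y. U (x(k := y))) has_derivative (\<lambda>v. D k x \<bullet> v)) (at (x k))"
    and bound: "\<And>k x. k \<in> J \<Longrightarrow> x \<in> coord_cball J x0 r \<Longrightarrow> norm (D k x) \<le> B"
    and "x \<in> coord_cball I x0 r"
  shows "\<bar>U x - U x0\<bar> \<le> B * (\<Sum>c\<in>I. dist (x c) (x0 c))"
  using assms(1,2,5)
proof (induction I arbitrary: x rule: finite_induct)
  case empty
  then have "x = x0" by (auto simp: mem_coord_cball)
  then show ?case by simp
next
  case (insert k I)
  define z where "z = x(k := x0 k)"
  have z: "z \<in> coord_cball I x0 r"
    using insert.prems insert.hyps(2) by (auto simp: mem_coord_cball z_def)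
  have k: "k \<in> J" using insert.prems by simp
  have xk: "x k \<in> cball (x0 k) r"
    using insert.prems by (simp add: mem_coord_cball)
  then have r: "0 \<le> r"
    by (auto intro: order_trans[OF zero_le_dist])
  have "\<bar>U (z(k := x k)) - U (z(k := x0 k))\<bar> \<le> B * norm (x k - x0 k)"
    unfolding real_norm_def[symmetric]
  proof (rule differentiable_bound[of "cball (x0 k) r"])
    fix y assume y: "y \<in> cball (x0 k) r"
    show "((\<lambda>y. U (z(k := y))) has_derivative (\<lambda>v. D k (z(k := y)) \<bullet> v)) (at y within cball (x0 k) r)"
      using deriv[OF k, of "z(k := y)"] by (simp add: has_derivative_at_withinI)
    have "z(k := y) \<in> coord_cball J x0 r"
      using z y r insert.prems(1) by (auto simp: mem_coord_cball)
    then have DB: "norm (D k (z(k := y))) \<le> B" by (rule bound[OF k])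
    show "onorm (\<lambda>v. D k (z(k := y)) \<bullet> v) \<le> B"
    proof (rule onorm_bound)
      show "0 \<le> B" using DB norm_ge_zero order_trans by blast
      fix v
      show "norm (D k (z(k := y)) \<bullet> v) \<le> B * norm v"
        using Cauchy_Schwarz_ineq2[of "D k (z(k := y))" v] mult_right_mono[OF DB norm_ge_zero, of v]
        unfolding real_norm_def by linarith
    qed
  qed (use xk r in simp_all)
  moreover have "\<bar>U z - U x0\<bar> \<le> B * (\<Sum>c\<in>I. dist (z c) (x0 c))"
    using insert.IH[OF _ z] insert.prems(1) by simp
  moreover have "(\<Sum>c\<in>I. dist (z c) (x0 c)) = (\<Sum>c\<in>I. dist (x c) (x0 c))"
    using insert.hyps(2) by (intro sum.cong) (auto simp: z_def)
  ultimately show ?case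
    using insert.hyps by (simp add: z_def dist_norm distrib_left)
qed

lemma eventually_abs_diff_le_sum_dist:
  fixes U :: "(nat \<Rightarrow> 'a::euclidean_space) \<Rightarrow> real" and D :: "nat \<Rightarrow> (nat \<Rightarrow> 'a) \<Rightarrow> 'a"
  assumes dep: "depends_only i U"
    and deriv: "\<And>k x. k \<in> {1..i} \<Longrightarrow> ((\<lambda>y. U (x(k := y))) has_derivative (\<lambda>v. D k x \<bullet> v)) (at (x k))"
    and cont: "\<And>k. k \<in> {1..i} \<Longrightarrow> continuous_on UNIV (D k)"
  shows "\<exists>B. \<forall>\<^sub>F x in at x0. \<bar>U x - U x0\<bar> \<le> B * (\<Sum>c\<in>{1..i}. dist (x c) (x0 c))"
proof -
  define K where "K = coord_cball {1..i} x0 1"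
  have "compact ((\<lambda>w. \<Sum>k\<in>{1..i}. norm (D k w)) ` K)"
    unfolding K_def
    by (intro compact_continuous_image compact_coord_cball continuous_on_sum continuous_on_norm
        continuous_on_subset[OF cont]) auto
  then have "bounded ((\<lambda>w. \<Sum>k\<in>{1..i}. norm (D k w)) ` K)" by (rule compact_imp_bounded)
  then obtain B where "\<forall>y\<in>(\<lambda>w. \<Sum>k\<in>{1..i}. norm (D k w)) ` K. norm y \<le> B"
    unfolding bounded_iff by blast
  then have bound: "norm (D k w) \<le> B" if "k \<in> {1..i}" "w \<in> K" for k w
    using member_le_sum[of k "{1..i}" "\<lambda>k. norm (D k w)"] that by fastforce
  \<comment> \<open>Freezing the coordinates outside 1..i at x0 does not change U and, near x0, lands in K.\<close>
  define P where "P x = (\<lambda>c. if c \<in> {1..i} then x c else x0 c)" for x :: "nat \<Rightarrow> 'a"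
  have "\<forall>\<^sub>F x in at x0. \<forall>c\<in>{1..i}. dist (x c) (x0 c) < 1"
    using tendsto_coordinate[of _ x0] by (auto simp: eventually_ball_finite tendsto_iff)
  then have "\<forall>\<^sub>F x in at x0. \<bar>U x - U x0\<bar> \<le> B * (\<Sum>c\<in>{1..i}. dist (x c) (x0 c))"
  proof eventually_elim
    case (elim x)
    then have "P x \<in> coord_cball {1..i} x0 1" by (auto simp: P_def mem_coord_cball dist_commute)
    then have "\<bar>U (P x) - U x0\<bar> \<le> B * (\<Sum>c\<in>{1..i}. dist (P x c) (x0 c))"
      using abs_diff_le_sum_dist_on_coord_cball[where J = "{1..i}", OF finite_atLeastAtMost order_refl deriv
          bound[unfolded K_def]] by blast
    moreover have "U (P x) = U x" by (rule depends_onlyD[OF dep]) (simp add: P_def)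
    ultimately show ?case by (simp add: P_def)
  qed
  then show ?thesis by blast
qed

lemma continuous_on_if_continuous_partial_derivatives:
  fixes U :: "(nat \<Rightarrow> 'a::euclidean_space) \<Rightarrow> real" and D :: "nat \<Rightarrow> (nat \<Rightarrow> 'a) \<Rightarrow> 'a"
  assumes "depends_only i U"
    and "\<And>k x. k \<in> {1..i} \<Longrightarrow> ((\<lambda>y. U (x(k := y))) has_derivative (\<lambda>v. D k x \<bullet> v)) (at (x k))"
    and "\<And>k. k \<in> {1..i} \<Longrightarrow> continuous_on UNIV (D k)"
  shows "continuous_on UNIV U"
proof (intro continuous_at_imp_continuous_on ballI)
  fix x0
  obtain B where B: "\<forall>\<^sub>F x in at x0. \<bar>U x - U x0\<bar> \<le> B * (\<Sum>c\<in>{1..i}. dist (x c) (x0 c))"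
    using eventually_abs_diff_le_sum_dist[OF assms] by blast
  have "((\<lambda>x. B * (\<Sum>c\<in>{1..i}. dist (x c) (x0 c))) \<longlongrightarrow> B * (\<Sum>c\<in>{1..i}. dist (x0 c) (x0 c))) (at x0)"
    by (intro tendsto_intros tendsto_coordinate)
  then have "((\<lambda>x. B * (\<Sum>c\<in>{1..i}. dist (x c) (x0 c))) \<longlongrightarrow> 0) (at x0)"
    by simp
  moreover have "\<forall>\<^sub>F x in at x0. norm (U x - U x0) \<le> B * (\<Sum>c\<in>{1..i}. dist (x c) (x0 c))"
    using B by simp
  ultimately have "((\<lambda>x. U x - U x0) \<longlongrightarrow> 0) (at x0)"
    by (rule Lim_null_comparison[rotated])
  then show "isCont U x0" unfolding isCont_def by (rule LIM_zero_cancel)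
qed

lemma bounded_if_continuous_depends_only_bounded_support:
  fixes f :: "(nat \<Rightarrow> 'a::euclidean_space) \<Rightarrow> real"
  assumes cont: "continuous_on UNIV f" and dep: "depends_only n f"
    and supp: "\<And>x. f x \<noteq> 0 \<Longrightarrow> \<forall>k\<in>{1..n}. norm (x k) \<le> R"
  shows "\<exists>M. \<forall>x. \<bar>f x\<bar> \<le> M"
proof -
  define K where "K = coord_cball {1..n} (\<lambda>_. 0 :: 'a) R"
  have "compact (f ` K)"
    unfolding K_def by (intro compact_continuous_image compact_coord_cball continuous_on_subset[OF cont]) simp
  then have "bounded (f ` K)" by (rule compact_imp_bounded)
  then obtain B where B: "\<forall>y\<in>f ` K. norm y \<le> B"
    unfolding bounded_iff by blast
  have "\<bar>f x\<bar> \<le> max B 0" for x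
  proof (cases "f x = 0")
    case False
    define x' where "x' = (\<lambda>c. if c \<in> {1..n} then x c else 0)"
    have "f x = f x'" by (rule depends_onlyD[OF dep]) (simp add: x'_def)
    moreover have "x' \<in> K" using supp[OF False] by (auto simp: K_def x'_def mem_coord_cball)
    ultimately show ?thesis using B by fastforce
  qed simp
  then show ?thesis by (rule exI[where x = "max B 0", OF allI])
qed

definition cond_law :: "(nat \<Rightarrow> (nat \<Rightarrow> 'a::euclidean_space) \<Rightarrow> real) \<Rightarrow> nat \<Rightarrow> (nat \<Rightarrow> 'a) \<Rightarrow> 'a measure"
  where "cond_law u i x = density lborel (\<lambda>y. exp (- u i (x(i := y))))"

lemma measurable_cond_law [simp]:
  "g \<in> measurable (cond_law u i x) N \<longleftrightarrow> g \<in> measurable lborel N"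
  unfolding cond_law_def by simp

lemma prob_space_cond_law:
  assumes "(\<lambda>y. u i (x(i := y))) \<in> borel_measurable lborel"
    and "(\<integral>\<^sup>+ y. ennreal (exp (- u i (x(i := y)))) \<partial>lborel) = 1"
  shows "prob_space (cond_law u i x)"
  using assms by (intro prob_spaceI) (simp add: cond_law_def emeasure_density)

lemma integral_cond_law:
  fixes g :: "'a::euclidean_space \<Rightarrow> 'b::{banach, second_countable_topology}"
  assumes "(\<lambda>y. u i (x(i := y))) \<in> borel_measurable lborel" and "g \<in> borel_measurable lborel"
  shows "integral\<^sup>L (cond_law u i x) g = (\<integral>y. exp (- u i (x(i := y))) *\<^sub>R g y \<partial>lborel)"
  unfolding cond_law_def using assms by (intro integral_density) simp_all

lemma nn_integral_cond_law:
  assumes "(\<lambda>y. u i (x(i := y))) \<in> borel_measurable lborel" and "g \<in> borel_measurable lborel"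
  shows "(\<integral>\<^sup>+y. ennreal (g y) \<partial>cond_law u i x) = (\<integral>\<^sup>+y. ennreal (g y * exp (- u i (x(i := y)))) \<partial>lborel)"
  unfolding cond_law_def using assms
  by (subst nn_integral_density) (auto simp: ennreal_mult'' mult.commute)

lemma nn_integral_exp_inner_le_Lambda:
  assumes "(\<lambda>y. u i (x(i := y))) \<in> borel_measurable lborel"
    and "(\<lambda>y. du i k (x(i := y))) \<in> borel_measurable lborel"
  shows "(\<integral>\<^sup>+y. ennreal (exp (s \<bullet> du i k (x(i := y)))) \<partial>cond_law u i x) \<le> Lambda u du i k s"
  using assms unfolding Lambda_def
  by (subst nn_integral_cond_law) (auto intro!: SUP_upper2[where i = x])

lemma mgf_cond_law_le_of_Lambda_le:
  assumes "(\<lambda>y. u i (x(i := y))) \<in> borel_measurable lborel"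
    and "(\<lambda>y. du i k (x(i := y))) \<in> borel_measurable lborel"
    and "Lambda u du i k s \<le> ennreal c" and "0 \<le> c"
  shows "integrable (cond_law u i x) (\<lambda>y. exp (s \<bullet> du i k (x(i := y))))"
    and "(\<integral>y. exp (s \<bullet> du i k (x(i := y))) \<partial>cond_law u i x) \<le> c"
  using integrable_and_integral_le_of_nn_integral_le[OF _ _
      order_trans[OF nn_integral_exp_inner_le_Lambda[where u = u and du = du and i = i and k = k and x = x,
        OF assms(1,2)] assms(3)] assms(4)] assms(2)
  by auto

lemma gfun_Suc_eq_cond_law:
  assumes "u (n - i) \<in> borel_measurable borel" and "gfun n u f i \<in> borel_measurable borel"
  shows "gfun n u f (Suc i) x = sqrt (\<integral>y. (gfun n u f i (x(n - i := y)))\<^sup>2 \<partial>cond_law u (n - i) x)"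
proof -
  have "(\<lambda>y. (gfun n u f i (x(n - i := y)))\<^sup>2) \<in> borel_measurable lborel"
    using borel_measurable_comp_fun_upd[OF assms(2)] by measurable
  from integral_cond_law[where u = u and i = "n - i" and x = x, OF borel_measurable_comp_fun_upd[OF assms(1)] this]
  show ?thesis by (simp add: mult.commute)
qed

lemma borel_measurable_gfun:
  assumes "f \<in> borel_measurable borel" and "\<And>i. i < l \<Longrightarrow> u (n - i) \<in> borel_measurable borel"
  shows "gfun n u f l \<in> borel_measurable borel"
proof -
  have "i \<le> l \<Longrightarrow> gfun n u f i \<in> borel_measurable borel" for i
  proof (induction i)
    case (Suc i)
    then have "gfun n u f i \<in> borel_measurable borel" and "u (n - i) \<in> borel_measurable borel"
      using assms(2) by simp_all
    then have "(\<lambda>z. (gfun n u f i z)\<^sup>2 * exp (- u (n - i) z)) \<in> borel_measurable borel"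
      by measurable
    from borel_measurable_integral_fun_upd[OF this, of "n - i"]
    show ?case by simp
  qed (use assms in simp)
  then show ?thesis by simp
qed

lemma abs_gfun_le:
  assumes f_meas: "f \<in> borel_measurable borel" and f_le: "\<And>x. \<bar>f x\<bar> \<le> M"
    and u_meas: "\<And>i. i < l \<Longrightarrow> u (n - i) \<in> borel_measurable borel"
    and density: "\<And>i x. i < l \<Longrightarrow> (\<integral>\<^sup>+ y. ennreal (exp (- u (n - i) (x(n - i := y)))) \<partial>lborel) = 1"
  shows "\<bar>gfun n u f l x\<bar> \<le> M"
proof -
  have "i \<le> l \<Longrightarrow> \<bar>gfun n u f i x\<bar> \<le> M" for i x
  proof (induction i arbitrary: x)
    case (Suc i)
    then have i: "i < l" by simp
    have g_meas: "gfun n u f i \<in> borel_measurable borel"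
      by (rule borel_measurable_gfun[OF f_meas]) (use u_meas i in simp)
    interpret prob_space "cond_law u (n - i) x"
      using u_meas[OF i] density[OF i] by (intro prob_space_cond_law borel_measurable_comp_fun_upd)
    have "(gfun n u f i z)\<^sup>2 \<le> M\<^sup>2" for z
      using Suc.IH[of z] i by (metis power2_abs power_mono abs_ge_zero less_imp_le)
    moreover have "(\<lambda>y. (gfun n u f i (x(n - i := y)))\<^sup>2) \<in> borel_measurable (cond_law u (n - i) x)"
      using borel_measurable_comp_fun_upd[OF g_meas] by simp
    ultimately have "(\<integral>y. (gfun n u f i (x(n - i := y)))\<^sup>2 \<partial>cond_law u (n - i) x) \<le> M\<^sup>2"
      by (intro integral_le_const integrable_const_bound[where B = "M\<^sup>2"]) auto
    then have "gfun n u f (Suc i) x \<le> sqrt (M\<^sup>2)"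
      unfolding gfun_Suc_eq_cond_law[OF u_meas[OF i] g_meas] by (rule real_sqrt_le_mono)
    moreover have "0 \<le> M" using f_le[of x] by linarith
    ultimately show ?case by simp
  qed (use f_le in simp)
  then show ?thesis by simp
qed

theorem lemma5p3:
  fixes u :: "nat \<Rightarrow> (nat \<Rightarrow> 'a::euclidean_space) \<Rightarrow> real"
    and du :: "nat \<Rightarrow> nat \<Rightarrow> (nat \<Rightarrow> 'a) \<Rightarrow> 'a"
    and f :: "(nat \<Rightarrow> 'a) \<Rightarrow> real"
    and n l j :: nat and \<kappa> :: real
  assumes u_dep: "\<And>i. i \<in> {2..n} \<Longrightarrow> depends_only i (u i)"
    and u_deriv: "\<And>i k x. i \<in> {2..n} \<Longrightarrow> k \<in> {1..i} \<Longrightarrow>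
           ((\<lambda>y. u i (x(k:=y))) has_derivative (\<lambda>v. du i k x \<bullet> v)) (at (x k))"
    and du_cont: "\<And>i k. i \<in> {2..n} \<Longrightarrow> k \<in> {1..i} \<Longrightarrow> continuous_on UNIV (du i k)"
    and density: "\<And>i x. i \<in> {2..n} \<Longrightarrow>
           (\<integral>\<^sup>+ y. ennreal (exp (- u i (x(i:=y)))) \<partial>lborel) = 1"
    and f_dep: "depends_only n f"
    and f_smooth: "smooth_fun n f"
    and f_supp: "\<exists>R. \<forall>x. f x \<noteq> 0 \<longrightarrow> (\<forall>k\<in>{1..n}. norm (x k) \<le> R)"
    and lj: "l < j" "j \<le> n - 1"
    and subgauss: "\<And>s. Lambda u du (n - l) (n - j) s \<le> ennreal (exp (\<kappa> * (norm s)\<^sup>2 / 2))"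
  shows "norm (\<integral>y. ((gfun n u f l (x(n - l := y)))\<^sup>2 * exp (- u (n - l) (x(n - l := y))))
                   *\<^sub>R du (n - l) (n - j) (x(n - l := y)) \<partial>lborel)
         \<le> gfun n u f (Suc l) x *
           sqrt (2 * \<kappa> * (\<integral>y. (gfun n u f l (x(n - l := y)))\<^sup>2
                    * ln ((gfun n u f l (x(n - l := y)))\<^sup>2 / (gfun n u f (Suc l) x)\<^sup>2)
                    * exp (- u (n - l) (x(n - l := y))) \<partial>lborel))"
proof -
  have u_meas: "u i \<in> borel_measurable borel" if "i \<in> {2..n}" for i
    using continuous_on_if_continuous_partial_derivatives[OF u_dep u_deriv du_cont] that
    by (intro borel_measurable_continuous_onI) auto
  have f_cont: "continuous_on UNIV f" using f_smooth by (cases rule: smooth_fun.cases) auto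
  then obtain M where f_le: "\<And>x. \<bar>f x\<bar> \<le> M"
    using bounded_if_continuous_depends_only_bounded_support[OF _ f_dep] f_supp by metis
  have f_meas: "f \<in> borel_measurable borel" using f_cont by (rule borel_measurable_continuous_onI)
  define g where "g = gfun n u f l"
  have g_meas: "g \<in> borel_measurable borel"
    unfolding g_def by (rule borel_measurable_gfun[OF f_meas]) (use u_meas lj in auto)
  have g_le: "\<bar>g z\<bar> \<le> M" for z
    unfolding g_def by (rule abs_gfun_le[OF f_meas f_le]) (use u_meas density lj in auto)
  have ij: "n - l \<in> {2..n}" "n - j \<in> {1..n - l}" using lj by auto
  have u_line: "(\<lambda>y. u (n - l) (x(n - l := y))) \<in> borel_measurable lborel"
    by (rule borel_measurable_comp_fun_upd[OF u_meas[OF ij(1)]])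
  have V_meas: "(\<lambda>y. du (n - l) (n - j) (x(n - l := y))) \<in> borel_measurable lborel"
    by (rule borel_measurable_comp_fun_upd[OF borel_measurable_continuous_onI[OF du_cont[OF ij]]])
  have h_meas: "(\<lambda>y. (g (x(n - l := y)))\<^sup>2) \<in> borel_measurable lborel"
    using borel_measurable_comp_fun_upd[OF g_meas] by measurable
  interpret prob_space "cond_law u (n - l) x"
    by (rule prob_space_cond_law[where u = u and i = "n - l" and x = x, OF u_line density[OF ij(1)]])
  have "norm (expectation (\<lambda>y. (g (x(n - l := y)))\<^sup>2 *\<^sub>R du (n - l) (n - j) (x(n - l := y))))
    \<le> sqrt (expectation (\<lambda>y. (g (x(n - l := y)))\<^sup>2))
       * sqrt (2 * \<kappa> * expectation (\<lambda>y. (g (x(n - l := y)))\<^sup>2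
           * ln ((g (x(n - l := y)))\<^sup>2 / expectation (\<lambda>y. (g (x(n - l := y)))\<^sup>2))))"
    using h_meas V_meas power_mono[OF g_le abs_ge_zero, of _ 2]
      mgf_cond_law_le_of_Lambda_le[where u = u and du = du and i = "n - l" and k = "n - j" and x = x,
        OF u_line V_meas subgauss]
    by (intro norm_expectation_scaleR_le_sqrt_entropy[where C = "M\<^sup>2"]) auto
  moreover have "gfun n u f (Suc l) x = sqrt (expectation (\<lambda>y. (g (x(n - l := y)))\<^sup>2))"
    unfolding g_def by (rule gfun_Suc_eq_cond_law[OF u_meas[OF ij(1)] g_meas[unfolded g_def]])
  ultimately show ?thesis
    using h_meas V_meas u_line by (simp add: integral_cond_law g_def mult_ac del: gfun.simps)
qed

end
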